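(* For $\eta>0$ let $\Gamma$ be the boundary of the rectangle with vertices $\pm3\pm\mathbf i\eta/2$, traversed counterclockwise. Then $$\operatorname{Im}\Big[\oint_\Gamma m_0(z)m_0(z+\mathbf i\eta)\big(m_0(z+\mathbf i\eta)-m_0(z)\big)\,dz\Big]=2\pi+o(1)\quad\text{as }\eta\to0.$$
   Context: $m_0(z)=\int\frac{\rho(x)}{x-z}dx=\frac{-z+\sqrt{z^2-4}}2$ is the Stieltjes transform of the semicircle density $\rho(x)=\frac1{2\pi}\sqrt{4-x^2}\,\mathbb 1\{|x|\le2\}$, defined for $z\in\mathbb C\setminus[-2,2]$ (branch cut on $[-2,2]$, $\sqrt{z^2-4}\sim z$ as $|z|\to\infty$). *)

theory Defs
  imports "HOL-Complex_Analysis.Complex_Analysis"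
begin

text \<open>Stieltjes transform of the semicircle law, m0 z = (-z + sqrt(z^2-4))/2, with the
branch of sqrt(z^2-4) that has its cut on [-2,2] and behaves like z at infinity.
This branch is realised as csqrt(z-2) * csqrt(z+2) (principal square roots).\<close>
definition m0 :: "complex \<Rightarrow> complex" where
  "m0 z = (- z + csqrt (z - 2) * csqrt (z + 2)) / 2"

definition rect_contour :: "real \<Rightarrow> real \<Rightarrow> complex" where
  "rect_contour \<eta> =
     linepath (Complex 3 (-\<eta>/2)) (Complex 3 (\<eta>/2)) +++
     linepath (Complex 3 (\<eta>/2)) (Complex (-3) (\<eta>/2)) +++
     linepath (Complex (-3) (\<eta>/2)) (Complex (-3) (-\<eta>/2)) +++
     linepath (Complex (-3) (-\<eta>/2)) (Complex 3 (-\<eta>/2))"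

end

theory Submission
  imports Defs
begin

text \<open>
  Since |m0| \<le> 1, the integrand is bounded by 2, so the two vertical edges, of length
  \<eta>, contribute O(\<eta>). On the upper edge z and z + i\<eta> both approach the same point x of the real
  axis from above, so the factor m0(z + i\<eta>) - m0(z) tends to 0. On the lower edge
  z + i\<eta> is the conjugate of z, hence m0(z) is the conjugate of v = m0(z + i\<eta>) and the
  integrand equals |v|^2 (v - conj v), which tends to 2i |m0(x)|^2 Im m0(x) = i sqrt(4 - x^2)
  on [-2, 2] and to 0 outside. Dominated convergence on the horizontal edges and
  the semicircle area \<integral> sqrt(4 - x^2) dx = 2\<pi> give the limit 2\<pi>i for the contour integral.
\<close>

lemma csqrt_cnj: "Im z \<noteq> 0 \<Longrightarrow> csqrt (cnj z) = cnj (csqrt z)"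
  by (rule complex_eqI) (auto simp: sgn_if)

lemma csqrt_eq_csqrt_minus:
  assumes "Im w \<noteq> 0 \<or> Re w < 0"
  shows "csqrt w = (if Im w < 0 then - \<i> else \<i>) * csqrt (- w)"
proof (cases "Im w < 0")
  case True
  then show ?thesis by simp
next
  case False
  then have "csqrt (- (- w)) = \<i> * csqrt (- w)"
    using assms by (intro csqrt_minus) auto
  then show ?thesis using False by simp
qed

lemma Im_csqrt_mult_nonneg:
  assumes "Im w = Im w'"
  shows "0 \<le> Im (csqrt w) * Im (csqrt w')"
proof -
  define s where "s = (if Im w = 0 then 1 else sgn (Im w))"
  have "Im (csqrt w) * Im (csqrt w') = (s * s) * (sqrt ((cmod w - Re w) / 2) * sqrt ((cmod w' - Re w') / 2))"
    using assms by (simp add: s_def)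
  also have "\<dots> \<ge> 0"
    using complex_Re_le_cmod[of w] complex_Re_le_cmod[of w'] by simp
  finally show ?thesis .
qed

lemma csqrt_upper_half_plane:
  "0 \<le> Im z \<Longrightarrow> csqrt z = Complex (sqrt ((cmod z + Re z) / 2)) (sqrt ((cmod z - Re z) / 2))"
  by (simp add: complex_eq_iff)

lemma tendsto_integral_at_right_dominated:
  fixes f :: "real \<Rightarrow> 'a::euclidean_space \<Rightarrow> 'b::euclidean_space"
  assumes integrable: "\<And>\<eta>. a < \<eta> \<Longrightarrow> f \<eta> integrable_on S" and "h integrable_on S"
    and dominated: "\<And>\<eta> x. a < \<eta> \<Longrightarrow> x \<in> S \<Longrightarrow> norm (f \<eta> x) \<le> h x"
    and pointwise: "\<And>x. x \<in> S \<Longrightarrow> ((\<lambda>\<eta>. f \<eta> x) \<longlongrightarrow> g x) (at_right a)"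
  shows "((\<lambda>\<eta>. integral S (f \<eta>)) \<longlongrightarrow> integral S g) (at_right a)"
  unfolding tendsto_at_iff_sequentially comp_def
proof (intro allI impI)
  fix X :: "nat \<Rightarrow> real"
  assume X: "\<forall>k. X k \<in> {a<..} - {a}" and "X \<longlonglongrightarrow> a"
  then have "filterlim X (at_right a) sequentially"
    by (intro tendsto_imp_filterlim_at_right) auto
  then show "(\<lambda>k. integral S (f (X k))) \<longlonglongrightarrow> integral S g"
    using X by (intro dominated_convergence(2)[OF _ \<open>h integrable_on S\<close>] integrable dominated
                 filterlim_compose[OF pointwise]) auto
qed

lemma contour_integral_horizontal_linepath:
  assumes "a < b"
  shows "contour_integral (linepath (Complex a y) (Complex b y)) f
           = integral {a..b} (\<lambda>x. f (Complex x y))"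
proof -
  have "linepath (Complex a y) (Complex b y) = (+) (\<i> * of_real y) \<circ> linepath (of_real a) (of_real b)"
    by (simp add: linepath_translate Complex_eq add.commute)
  then show ?thesis
    using assms by (simp add: contour_integral_translate contour_integral_linepath_Reals_eq Complex_eq)
qed

lemma semicircle_area: "((\<lambda>x. sqrt (4 - x^2)) has_integral 2 * pi) {-2..2::real}"
proof -
  define F where "F x = x / 2 * sqrt (4 - x^2) + 2 * arcsin (x / 2)" for x :: real
  have "(F has_real_derivative sqrt (4 - x^2)) (at x)" if "x \<in> {-2<..<2}" for x
  proof -
    have "0 < (2 - x) * (2 + x)" using that by (intro mult_pos_pos) auto
    then have pos: "0 < 4 - x^2" by (simp add: algebra_simps power2_eq_square)
    define s where "s = sqrt (4 - x^2)"
    have s: "0 < s" "s^2 = 4 - x^2" using pos by (simp_all add: s_def)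
    have "sqrt (1 - (x / 2)^2) = sqrt ((4 - x^2) / 2^2)"
      by (simp add: field_simps power_divide)
    then have "sqrt (1 - (x / 2)^2) = s / 2" by (simp add: s_def real_sqrt_divide)
    then have "(F has_real_derivative 1 / 2 * s + x / 2 * (- x / s) + 2 * (1 / 2 / (s / 2))) (at x)"
      unfolding F_def s_def using pos that by (auto intro!: derivative_eq_intros simp: field_simps)
    moreover have "1 / 2 * s + x / 2 * (- x / s) + 2 * (1 / 2 / (s / 2)) = s"
      using s by (simp add: field_simps power2_eq_square)
    ultimately show ?thesis by (simp add: s_def)
  qed
  moreover have "continuous_on {-2..2} F"
    unfolding F_def by (intro continuous_intros continuous_on_arcsin) auto
  ultimately have "((\<lambda>x. sqrt (4 - x^2)) has_integral F 2 - F (-2)) {-2..2}"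
    by (intro fundamental_theorem_of_calculus_interior)
       (auto simp: has_real_derivative_iff_has_vector_derivative)
  moreover have "F 2 - F (-2) = 2 * pi" by (simp add: F_def)
  ultimately show ?thesis by simp
qed

lemma m0_cnj: "Im z \<noteq> 0 \<Longrightarrow> m0 (cnj z) = cnj (m0 z)"
  using csqrt_cnj[of "z - 2"] csqrt_cnj[of "z + 2"] by (simp add: m0_def)

lemma m0_minus:
  assumes "Im z \<noteq> 0 \<or> Re z < -2"
  shows "m0 (- z) = - m0 z"
proof -
  define s where "s = (if Im z < 0 then - \<i> else \<i>)"
  have "csqrt (z - 2) = s * csqrt (- z + 2)" "csqrt (z + 2) = s * csqrt (- z - 2)"
    using csqrt_eq_csqrt_minus[of "z - 2"] csqrt_eq_csqrt_minus[of "z + 2"] assms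
    by (auto simp: s_def)
  moreover have "s * s = -1" by (simp add: s_def)
  ultimately have "csqrt (z - 2) * csqrt (z + 2) = - (csqrt (- z - 2) * csqrt (- z + 2))"
    by (metis mult.commute mult.left_commute mult_minus1)
  then show ?thesis by (simp add: m0_def field_simps)
qed

lemma norm_m0_le: "norm (m0 z) \<le> 1"
proof -
  define a b where "a = csqrt (z - 2)" and "b = csqrt (z + 2)"
  have a2: "a^2 = z - 2" and b2: "b^2 = z + 2" by (simp_all add: a_def b_def)
  have m0_eq: "m0 z = - ((a - b)^2) / 4"
  proof -
    have z: "z = (a^2 + b^2) / 2" using a2 b2 by simp
    show ?thesis unfolding m0_def a_def[symmetric] b_def[symmetric]
      by (subst z) (simp add: field_simps power2_eq_square)
  qed
  have "(a - b) * (a + b) = -4" using a2 b2 by (simp add: algebra_simps power2_eq_square)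
  then have prod: "norm (a - b) * norm (a + b) = 4"
    by (metis norm_minus_cancel norm_mult norm_numeral)
  have "0 \<le> Re a * Re b" unfolding a_def b_def by (intro mult_nonneg_nonneg Re_csqrt)
  moreover have "0 \<le> Im a * Im b" unfolding a_def b_def by (rule Im_csqrt_mult_nonneg) simp
  ultimately have "(norm (a - b))^2 \<le> (norm (a + b))^2"
    unfolding cmod_power2 by (simp add: power2_eq_square algebra_simps)
  then have "norm (a - b) \<le> norm (a + b)" by (simp add: power2_le_iff_abs_le)
  then have "(norm (a - b))^2 \<le> 4"
    using mult_left_mono[of "norm (a - b)" "norm (a + b)" "norm (a - b)"] prod
    by (simp add: power2_eq_square)
  then show ?thesis by (simp add: m0_eq norm_power)
qed

text \<open>On (-\<infinity>, -2) both principal square roots in m0 jump but their product does not;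
  continuity there is transported from (2, \<infinity>) through m0_minus.\<close>

lemma isCont_m0:
  assumes "Im z \<noteq> 0 \<or> 2 < \<bar>Re z\<bar>"
  shows "isCont m0 z"
proof -
  have right: "isCont m0 w" if "Im w \<noteq> 0 \<or> 2 < Re w" for w
  proof -
    have "w - 2 \<notin> \<real>\<^sub>\<le>\<^sub>0" "w + 2 \<notin> \<real>\<^sub>\<le>\<^sub>0"
      using that by (auto simp: complex_nonpos_Reals_iff)
    then show ?thesis unfolding m0_def[abs_def] by (intro continuous_intros isCont_csqrt') auto
  qed
  show ?thesis
  proof (cases "Im z \<noteq> 0 \<or> 2 < Re z")
    case True
    then show ?thesis by (rule right)
  next
    case False
    then have "Re z < -2" using assms by auto
    then have "\<forall>\<^sub>F w in nhds z. w \<in> {w. Re w < -2}"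
      by (intro eventually_nhds_in_open open_halfspace_Re_lt) auto
    then have "\<forall>\<^sub>F w in nhds z. - m0 (- w) = m0 w"
      by eventually_elim (simp add: m0_minus)
    then have "isCont (\<lambda>w. - m0 (- w)) z = isCont m0 z"
      by (rule isCont_cong)
    moreover have "isCont (\<lambda>w. - m0 (- w)) z"
      using right[of "- z"] \<open>Re z < -2\<close> by (auto intro!: continuous_intros isCont_o2[where f = uminus])
    ultimately show ?thesis by simp
  qed
qed

lemma continuous_on_m0_upper_half_plane: "continuous_on {z. 0 \<le> Im z} m0"
proof -
  have "continuous_on {z. 0 \<le> Im z} csqrt"
    by (rule continuous_on_cong[THEN iffD2, OF refl csqrt_upper_half_plane])
       (auto simp: Complex_eq intro!: continuous_intros)
  then have "continuous_on {z. 0 \<le> Im z} (\<lambda>z. csqrt (z + c))" if "Im c = 0" for c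
    by (rule continuous_on_compose2) (auto intro!: continuous_intros simp: that)
  from this[of 2] this[of "-2"] show ?thesis
    unfolding m0_def[abs_def] by (auto intro!: continuous_intros)
qed

lemma tendsto_m0_from_above:
  assumes "0 \<le> c"
  shows "((\<lambda>\<eta>. m0 (Complex x (c * \<eta>))) \<longlongrightarrow> m0 (of_real x)) (at_right 0)"
proof -
  have "of_real x = Complex x (c * 0)" by (simp add: complex_eq_iff)
  then have lim: "((\<lambda>\<eta>. Complex x (c * \<eta>)) \<longlongrightarrow> of_real x) (at_right 0)"
    unfolding \<open>of_real x = Complex x (c * 0)\<close> by (intro tendsto_intros)
  have "\<forall>\<^sub>F \<eta> in at_right 0. Complex x (c * \<eta>) \<in> {z. 0 \<le> Im z}"
    using eventually_at_right_less[of 0] by eventually_elim (use assms in simp)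
  from continuous_on_tendsto_compose[OF continuous_on_m0_upper_half_plane lim _ this]
  show ?thesis by simp
qed

lemma m0_of_real: "m0 (of_real x) = (- of_real x + csqrt (of_real (x - 2)) * csqrt (of_real (x + 2))) / 2"
  by (simp add: m0_def)

lemma m0_of_real_inside:
  assumes "\<bar>x\<bar> \<le> 2"
  shows "m0 (of_real x) = Complex (- x / 2) (sqrt (4 - x^2) / 2)"
proof -
  have "sqrt (2 - x) * sqrt (x + 2) = sqrt (4 - x^2)"
    by (simp add: real_sqrt_mult[symmetric] power2_eq_square algebra_simps)
  with assms show ?thesis by (simp add: m0_def complex_eq_iff)
qed

lemma Im_m0_of_real_outside: "2 < \<bar>x\<bar> \<Longrightarrow> Im (m0 (of_real x)) = 0"
  unfolding m0_of_real csqrt_of_real' by auto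

lemma m0_of_real_jump:
  "cnj (m0 (of_real x)) * m0 (of_real x) * (m0 (of_real x) - cnj (m0 (of_real x)))
     = (if \<bar>x\<bar> \<le> 2 then sqrt (4 - x^2) else 0) *\<^sub>R \<i>"
proof (cases "\<bar>x\<bar> \<le> 2")
  case True
  then have "x^2 \<le> 2^2" using abs_le_square_iff[of x 2] by simp
  then have "(sqrt (4 - x^2))^2 = 4 - x^2" by simp
  with True show ?thesis
    by (simp add: m0_of_real_inside complex_eq_iff field_simps power2_eq_square)
next
  case False
  then have "m0 (of_real x) = cnj (m0 (of_real x))"
    by (simp add: complex_eq_iff Im_m0_of_real_outside)
  with False show ?thesis by simp
qed

definition integrand :: "real \<Rightarrow> complex \<Rightarrow> complex" where
  "integrand \<eta> z = m0 z * m0 (z + \<i> * of_real \<eta>) * (m0 (z + \<i> * of_real \<eta>) - m0 z)"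

lemma norm_integrand_le: "norm (integrand \<eta> z) \<le> 2"
proof -
  define w where "w = z + \<i> * of_real \<eta>"
  have "norm (m0 z) * norm (m0 w) \<le> 1"
    using norm_m0_le by (intro mult_le_one) auto
  moreover have "norm (m0 w - m0 z) \<le> 2"
    using norm_triangle_ineq4[of "m0 w" "m0 z"] norm_m0_le[of w] norm_m0_le[of z] by simp
  ultimately have "norm (m0 z) * norm (m0 w) * norm (m0 w - m0 z) \<le> 1 * 2"
    by (intro mult_mono) auto
  then show ?thesis by (simp add: integrand_def norm_mult w_def)
qed

lemma isCont_integrand:
  assumes "Im z \<noteq> 0 \<and> Im z \<noteq> - \<eta> \<or> 2 < \<bar>Re z\<bar>"
  shows "isCont (integrand \<eta>) z"
proof -
  have "isCont m0 z" using assms by (intro isCont_m0) auto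
  moreover have "isCont m0 (z + \<i> * of_real \<eta>)" using assms by (intro isCont_m0) auto
  then have "isCont (\<lambda>z. m0 (z + \<i> * of_real \<eta>)) z"
    by (rule isCont_o2[rotated]) (intro continuous_intros)
  ultimately show ?thesis unfolding integrand_def[abs_def] by (intro continuous_intros)
qed

lemma contour_integrable_integrand_vertical:
  assumes "2 < \<bar>x\<bar>"
  shows "integrand \<eta> contour_integrable_on linepath (Complex x y) (Complex x y')"
  using assms
  by (intro contour_integrable_continuous_linepath continuous_at_imp_continuous_on ballI isCont_integrand)
     (simp add: closed_segment_same_Re)

lemma contour_integrable_integrand_horizontal:
  assumes "y \<noteq> 0" "y \<noteq> - \<eta>"
  shows "integrand \<eta> contour_integrable_on linepath (Complex x y) (Complex x' y)"
  using assms
  by (intro contour_integrable_continuous_linepath continuous_at_imp_continuous_on ballI isCont_integrand)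
     (simp add: closed_segment_same_Im)

lemma integrable_integrand_horizontal:
  assumes "y \<noteq> 0" "y \<noteq> - \<eta>"
  shows "(\<lambda>x. integrand \<eta> (Complex x y)) integrable_on {a..b}"
proof -
  have "isCont (\<lambda>x. integrand \<eta> (Complex x y)) x" for x
    using assms by (intro isCont_o2[OF _ isCont_integrand]) (auto simp: Complex_eq intro!: continuous_intros)
  then show ?thesis
    by (intro integrable_continuous_interval continuous_at_imp_continuous_on) auto
qed

lemma tendsto_vertical_edge:
  assumes "2 < \<bar>x\<bar>"
  shows "((\<lambda>\<eta>. contour_integral (linepath (Complex x (-\<eta>/2)) (Complex x (\<eta>/2))) (integrand \<eta>))
           \<longlongrightarrow> 0) (at_right 0)"
proof (rule Lim_null_comparison)
  have "norm (contour_integral (linepath (Complex x (-\<eta>/2)) (Complex x (\<eta>/2))) (integrand \<eta>))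
          \<le> 2 * norm (Complex x (\<eta>/2) - Complex x (-\<eta>/2))" for \<eta>
    using assms norm_integrand_le
    by (intro contour_integral_bound_linepath contour_integrable_integrand_vertical) auto
  moreover have "norm (Complex x (\<eta>/2) - Complex x (-\<eta>/2)) = \<bar>\<eta>\<bar>" for \<eta>
    by (simp add: cmod_def)
  ultimately show "\<forall>\<^sub>F \<eta> in at_right 0.
      norm (contour_integral (linepath (Complex x (-\<eta>/2)) (Complex x (\<eta>/2))) (integrand \<eta>)) \<le> 2 * \<bar>\<eta>\<bar>"
    by simp
  show "((\<lambda>\<eta>. 2 * \<bar>\<eta>\<bar>) \<longlongrightarrow> 0) (at_right (0::real))"
    by (intro tendsto_eq_intros) auto
qed

lemma tendsto_integrand_upper_edge:
  "((\<lambda>\<eta>. integrand \<eta> (Complex x (\<eta>/2))) \<longlongrightarrow> 0) (at_right 0)"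
proof -
  have "integrand \<eta> (Complex x (\<eta>/2))
          = m0 (Complex x (1/2 * \<eta>)) * m0 (Complex x (3/2 * \<eta>))
              * (m0 (Complex x (3/2 * \<eta>)) - m0 (Complex x (1/2 * \<eta>)))" for \<eta>
  proof -
    have "Complex x (\<eta>/2) + \<i> * of_real \<eta> = Complex x (3/2 * \<eta>)" by (simp add: complex_eq_iff)
    then show ?thesis by (simp add: integrand_def)
  qed
  moreover have "((\<lambda>\<eta>. m0 (Complex x (1/2 * \<eta>)) * m0 (Complex x (3/2 * \<eta>))
              * (m0 (Complex x (3/2 * \<eta>)) - m0 (Complex x (1/2 * \<eta>))))
          \<longlongrightarrow> m0 x * m0 x * (m0 x - m0 x)) (at_right 0)"
    by (intro tendsto_intros tendsto_m0_from_above) auto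
  ultimately show ?thesis by simp
qed

lemma tendsto_integrand_lower_edge:
  "((\<lambda>\<eta>. integrand \<eta> (Complex x (-\<eta>/2)))
     \<longlongrightarrow> (if \<bar>x\<bar> \<le> 2 then sqrt (4 - x^2) else 0) *\<^sub>R \<i>) (at_right 0)"
proof -
  define p where "p v = cnj v * v * (v - cnj v)" for v
  have eq: "integrand \<eta> (Complex x (-\<eta>/2)) = p (m0 (Complex x (1/2 * \<eta>)))" if "0 < \<eta>" for \<eta>
  proof -
    have "Complex x (-\<eta>/2) + \<i> * of_real \<eta> = Complex x (1/2 * \<eta>)"
      and "Complex x (-\<eta>/2) = cnj (Complex x (1/2 * \<eta>))" by (simp_all add: complex_eq_iff)
    with that show ?thesis by (simp add: integrand_def p_def m0_cnj)
  qed
  have "\<forall>\<^sub>F \<eta> in at_right 0. p (m0 (Complex x (1/2 * \<eta>))) = integrand \<eta> (Complex x (-\<eta>/2))"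
    using eventually_at_right_less[of 0] by eventually_elim (rule eq[symmetric])
  moreover have "((\<lambda>\<eta>. p (m0 (Complex x (1/2 * \<eta>)))) \<longlongrightarrow> p (m0 x)) (at_right 0)"
    unfolding p_def by (intro tendsto_intros tendsto_m0_from_above) auto
  ultimately show ?thesis
    using m0_of_real_jump[of x] by (simp add: p_def tendsto_cong)
qed

lemma tendsto_upper_edge_integral:
  "((\<lambda>\<eta>. integral {-3..3} (\<lambda>x. integrand \<eta> (Complex x (\<eta>/2)))) \<longlongrightarrow> 0) (at_right 0)"
proof -
  have "((\<lambda>\<eta>. integral {-3..3} (\<lambda>x. integrand \<eta> (Complex x (\<eta>/2))))
          \<longlongrightarrow> integral {-3..3::real} (\<lambda>_. 0 :: complex)) (at_right 0)"
    by (rule tendsto_integral_at_right_dominated[where h = "\<lambda>_. 2"])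
       (auto intro: integrable_integrand_horizontal norm_integrand_le tendsto_integrand_upper_edge)
  then show ?thesis by simp
qed

lemma tendsto_lower_edge_integral:
  "((\<lambda>\<eta>. integral {-3..3} (\<lambda>x. integrand \<eta> (Complex x (-\<eta>/2)))) \<longlongrightarrow> (2 * pi) *\<^sub>R \<i>) (at_right 0)"
proof -
  define \<rho> where "\<rho> x = (if \<bar>x\<bar> \<le> 2 then sqrt (4 - x^2) else 0)" for x :: real
  have "(\<rho> has_integral 2 * pi) {-2..2}"
    by (rule has_integral_cong[THEN iffD1, OF _ semicircle_area]) (auto simp: \<rho>_def)
  then have "(\<rho> has_integral 2 * pi) {-3..3}"
    by (rule has_integral_on_superset) (auto simp: \<rho>_def)
  then have "integral {-3..3} (\<lambda>x. \<rho> x *\<^sub>R \<i>) = (2 * pi) *\<^sub>R \<i>"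
    by (intro integral_unique has_integral_scaleR_left)
  moreover have "((\<lambda>\<eta>. integral {-3..3} (\<lambda>x. integrand \<eta> (Complex x (-\<eta>/2))))
          \<longlongrightarrow> integral {-3..3} (\<lambda>x. \<rho> x *\<^sub>R \<i>)) (at_right 0)"
    using tendsto_integrand_lower_edge[folded \<rho>_def]
    by (intro tendsto_integral_at_right_dominated[where h = "\<lambda>_. 2"])
       (auto intro: integrable_integrand_horizontal norm_integrand_le)
  ultimately show ?thesis by simp
qed

lemma contour_integral_rect_contour:
  assumes "0 < \<eta>"
  shows "contour_integral (rect_contour \<eta>) (integrand \<eta>)
           = contour_integral (linepath (Complex 3 (-\<eta>/2)) (Complex 3 (\<eta>/2))) (integrand \<eta>)
             - integral {-3..3} (\<lambda>x. integrand \<eta> (Complex x (\<eta>/2)))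
             - contour_integral (linepath (Complex (-3) (-\<eta>/2)) (Complex (-3) (\<eta>/2))) (integrand \<eta>)
             + integral {-3..3} (\<lambda>x. integrand \<eta> (Complex x (-\<eta>/2)))"
proof -
  have integrable:
    "integrand \<eta> contour_integrable_on linepath (Complex 3 (-\<eta>/2)) (Complex 3 (\<eta>/2))"
    "integrand \<eta> contour_integrable_on linepath (Complex 3 (\<eta>/2)) (Complex (-3) (\<eta>/2))"
    "integrand \<eta> contour_integrable_on linepath (Complex (-3) (\<eta>/2)) (Complex (-3) (-\<eta>/2))"
    "integrand \<eta> contour_integrable_on linepath (Complex (-3) (-\<eta>/2)) (Complex 3 (-\<eta>/2))"
    using assms
    by (auto intro!: contour_integrable_integrand_vertical contour_integrable_integrand_horizontal)
  have reverse: "contour_integral (linepath b a) f = - contour_integral (linepath a b) f" for a b f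
    using contour_integral_reversepath[of "linepath a b" f] by simp
  have upper: "contour_integral (linepath (Complex 3 (\<eta>/2)) (Complex (-3) (\<eta>/2))) (integrand \<eta>)
      = - integral {-3..3} (\<lambda>x. integrand \<eta> (Complex x (\<eta>/2)))"
    by (simp add: reverse[of "Complex 3 (\<eta>/2)"] contour_integral_horizontal_linepath)
  have left: "contour_integral (linepath (Complex (-3) (\<eta>/2)) (Complex (-3) (-\<eta>/2))) (integrand \<eta>)
      = - contour_integral (linepath (Complex (-3) (-\<eta>/2)) (Complex (-3) (\<eta>/2))) (integrand \<eta>)"
    by (rule reverse)
  have lower: "contour_integral (linepath (Complex (-3) (-\<eta>/2)) (Complex 3 (-\<eta>/2))) (integrand \<eta>)
      = integral {-3..3} (\<lambda>x. integrand \<eta> (Complex x (-\<eta>/2)))"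
    by (simp add: contour_integral_horizontal_linepath)
  have "contour_integral (rect_contour \<eta>) (integrand \<eta>)
      = contour_integral (linepath (Complex 3 (-\<eta>/2)) (Complex 3 (\<eta>/2))) (integrand \<eta>)
        + (contour_integral (linepath (Complex 3 (\<eta>/2)) (Complex (-3) (\<eta>/2))) (integrand \<eta>)
        + (contour_integral (linepath (Complex (-3) (\<eta>/2)) (Complex (-3) (-\<eta>/2))) (integrand \<eta>)
        + contour_integral (linepath (Complex (-3) (-\<eta>/2)) (Complex 3 (-\<eta>/2))) (integrand \<eta>)))"
    unfolding rect_contour_def using integrable by (simp add: contour_integrable_joinI valid_path_join)
  then show ?thesis unfolding upper left lower by simp
qed

theorem lemma5p5:
  shows "((\<lambda>\<eta>. Im (contour_integral (rect_contour \<eta>)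
            (\<lambda>z. m0 z * m0 (z + \<i> * of_real \<eta>) * (m0 (z + \<i> * of_real \<eta>) - m0 z))))
          \<longlongrightarrow> 2 * pi) (at_right 0)"
proof -
  have edges: "\<forall>\<^sub>F \<eta> in at_right 0.
      contour_integral (linepath (Complex 3 (-\<eta>/2)) (Complex 3 (\<eta>/2))) (integrand \<eta>)
      - integral {-3..3} (\<lambda>x. integrand \<eta> (Complex x (\<eta>/2)))
      - contour_integral (linepath (Complex (-3) (-\<eta>/2)) (Complex (-3) (\<eta>/2))) (integrand \<eta>)
      + integral {-3..3} (\<lambda>x. integrand \<eta> (Complex x (-\<eta>/2)))
        = contour_integral (rect_contour \<eta>) (integrand \<eta>)"
    using eventually_at_right_less[of 0]
    by eventually_elim (rule contour_integral_rect_contour[symmetric])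
  have "((\<lambda>\<eta>. contour_integral (rect_contour \<eta>) (integrand \<eta>))
          \<longlongrightarrow> 0 - 0 - 0 + (2 * pi) *\<^sub>R \<i>) (at_right 0)"
    by (rule Lim_transform_eventually[OF _ edges])
       (intro tendsto_intros tendsto_vertical_edge tendsto_upper_edge_integral
          tendsto_lower_edge_integral; simp)
  then show ?thesis
    using tendsto_Im by (fastforce simp: integrand_def[abs_def])
qed

end
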